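(* Consider the problem $\min_{x\in\mathbb{R}^n} f(x)$ subject to $g_i(x)\le 0$, $i=1,\dots,m$, where $f:\mathbb{R}^n\to\mathbb{R}$ is convex, continuous and bounded below and each $g_i$ is differentiable and $\mu_i$-strongly convex ($\mu_i>0$). Assume there is $\tilde x$ with $g_i(\tilde x)<0$ for all $i$, and that for every minimizer $x_0^*$ of $f$ over $\mathbb{R}^n$ some $i$ has $g_i(x_0^* )>0$. Let $x_i^*=\arg\min_{x\in\mathbb{R}^n}g_i(x)$ and $$\mathcal{X}:=\mathcal{B}\Big(\tilde x,\ \min_{i\in[m]}2\sqrt{\tfrac{-2g_i(x_i^* )}{\mu_i}}\Big).$$ Then the optimal solution $x^*$ of the problem lies in the interior of $\mathcal{X}$.
   Context: $\mathcal{B}(x,r)=\{z:\|z-x\|\le r\}$ is the closed Euclidean ball. $x^*$ denotes an optimal solution of the problem. *)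

theory Defs
  imports "HOL-Analysis.Analysis"
begin

definition strongly_convex_on :: "'a::real_normed_vector set \<Rightarrow> real \<Rightarrow> ('a \<Rightarrow> real) \<Rightarrow> bool" where
  "strongly_convex_on S \<mu> g \<longleftrightarrow> convex S \<and>
     (\<forall>x\<in>S. \<forall>y\<in>S. \<forall>t::real. 0 \<le> t \<and> t \<le> 1 \<longrightarrow>
        g ((1 - t) *\<^sub>R x + t *\<^sub>R y) \<le> (1 - t) * g x + t * g y - \<mu> / 2 * t * (1 - t) * (norm (x - y))\<^sup>2)"

end

theory Submission
  imports Defs
begin

text \<open>
  Strong convexity forces quadratic growth away from the global minimiser \<open>z\<close> of \<open>g\<close>:
  \<open>g z + \<mu>/2 \<parallel>x - z\<parallel>\<^sup>2 \<le> g x\<close>. Hence \<open>g x \<le> 0\<close> confines \<open>x\<close> to the ball around \<open>z\<close> of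
  radius \<open>r = sqrt (-2 g z / \<mu>)\<close>, and the Slater point, with \<open>g x < 0\<close>, lies in its interior.
  Any feasible point, in particular the optimum, is therefore at distance less than \<open>2 r\<close>
  from the Slater point, for every constraint.
\<close>

lemma strongly_convex_on_imp_convex_on:
  assumes "strongly_convex_on S \<mu> g" and "\<mu> \<ge> 0"
  shows "convex_on S g"
proof (rule convex_onI)
  fix t :: real and x y
  assume "0 < t" "t < 1" "x \<in> S" "y \<in> S"
  then have "g ((1 - t) *\<^sub>R x + t *\<^sub>R y)
      \<le> (1 - t) * g x + t * g y - \<mu> / 2 * t * (1 - t) * (norm (x - y))\<^sup>2"
    using assms(1) unfolding strongly_convex_on_def by simp
  moreover have "0 \<le> \<mu> / 2 * t * (1 - t) * (norm (x - y))\<^sup>2"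
    using \<open>0 < t\<close> \<open>t < 1\<close> \<open>\<mu> \<ge> 0\<close> by simp
  ultimately show "g ((1 - t) *\<^sub>R x + t *\<^sub>R y) \<le> (1 - t) * g x + t * g y"
    by linarith
next
  show "convex S"
    using assms(1) unfolding strongly_convex_on_def by simp
qed

lemma strongly_convex_on_continuous:
  fixes g :: "'a::euclidean_space \<Rightarrow> real"
  assumes "strongly_convex_on UNIV \<mu> g" and "\<mu> \<ge> 0"
  shows "continuous_on UNIV g"
  using assms by (intro convex_on_continuous strongly_convex_on_imp_convex_on) auto

lemma strongly_convex_on_quadratic_growth:
  assumes sc: "strongly_convex_on S \<mu> g"
    and S: "z \<in> S" "x \<in> S" and min: "\<forall>y\<in>S. g z \<le> g y"
  shows "g z + \<mu> / 2 * (norm (x - z))\<^sup>2 \<le> g x"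
proof (rule ccontr)
  define d where "d = (norm (x - z))\<^sup>2"
  define e where "e = g x - g z"
  assume "\<not> ?thesis"
  then have lt: "e < \<mu> / 2 * d"
    unfolding d_def e_def by simp
  have e: "0 \<le> e"
    using min S unfolding e_def by simp
  have along_segment: "\<mu> / 2 * (1 - t) * d \<le> e" if t: "0 < t" "t \<le> 1" for t
  proof -
    have "g z \<le> g ((1 - t) *\<^sub>R z + t *\<^sub>R x)"
      using min S t convexD_alt[of S] sc unfolding strongly_convex_on_def by simp
    also have "\<dots> \<le> (1 - t) * g z + t * g x - \<mu> / 2 * t * (1 - t) * (norm (z - x))\<^sup>2"
      using sc S t unfolding strongly_convex_on_def by simp
    finally have "t * (\<mu> / 2 * (1 - t) * d) \<le> t * e"
      unfolding d_def e_def by (simp add: norm_minus_commute algebra_simps)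
    then show ?thesis
      using t by simp
  qed
  have "0 < \<mu> / 2 * d"
    using lt e by linarith
  moreover have "0 \<le> d"
    unfolding d_def by simp
  ultimately have d: "0 < \<mu>" "0 < d"
    by (auto simp: zero_less_mult_iff)
  \<comment> \<open>as \<open>t \<rightarrow> 0\<close> the bound \<open>along_segment\<close> tends to \<open>\<mu> d / 2 > e\<close>; this \<open>t\<close> already exceeds \<open>e\<close>\<close>
  define t where "t = (\<mu> / 2 * d - e) / (\<mu> * d)"
  have t: "0 < t" "t \<le> 1"
    using lt e d unfolding t_def by (auto simp: field_simps)
  have "\<mu> / 2 * (1 - t) * d = \<mu> * d / 4 + e / 2"
    using d unfolding t_def by (simp add: field_simps)
  then show False
    using along_segment[OF t] lt by linarith
qed

lemma strongly_convex_on_bounded_sublevel: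
  fixes g :: "'a::euclidean_space \<Rightarrow> real"
  assumes sc: "strongly_convex_on UNIV \<mu> g" and "\<mu> > 0"
  shows "bounded {x. g x \<le> c}"
proof -
  have "continuous_on UNIV g"
    using strongly_convex_on_continuous[OF sc] \<open>\<mu> > 0\<close> by simp
  then have "compact (g ` sphere 0 1)"
    by (rule compact_continuous_image[OF continuous_on_subset]) auto
  then obtain B where B_sphere: "\<forall>v \<in> g ` sphere 0 1. \<bar>v\<bar> \<le> B"
    using compact_imp_bounded bounded_real by blast
  have B: "- B \<le> g u" if "norm u = 1" for u
  proof -
    have "\<bar>g u\<bar> \<le> B"
      using B_sphere that by simp
    then show ?thesis
      by (simp add: abs_le_iff)
  qed
  have "norm x \<le> max 1 (1 + 2 * (max (g 0) c + B) / \<mu>)" if "g x \<le> c" for x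
  proof (cases "norm x \<le> 1")
    case True
    then show ?thesis
      by simp
  next
    case False
    define n where "n = norm x"
    define t where "t = 1 / n"
    have n: "1 < n" and t: "0 \<le> t" "t \<le> 1"
      using False unfolding n_def t_def by (auto simp: divide_le_eq_1)
    \<comment> \<open>strong convexity on the segment from \<open>0\<close> to \<open>x\<close>, evaluated where it meets the unit sphere\<close>
    have "- B \<le> g (t *\<^sub>R x)"
      using n by (intro B) (auto simp: t_def n_def)
    moreover have "g (t *\<^sub>R x) \<le> (1 - t) * g 0 + t * g x - \<mu> / 2 * t * (1 - t) * n\<^sup>2"
    proof -
      have "g ((1 - t) *\<^sub>R 0 + t *\<^sub>R x)
          \<le> (1 - t) * g 0 + t * g x - \<mu> / 2 * t * (1 - t) * (norm (0 - x))\<^sup>2"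
        using sc t unfolding strongly_convex_on_def by blast
      then show ?thesis
        unfolding n_def by simp
    qed
    moreover have "(1 - t) * g 0 + t * g x \<le> max (g 0) c"
      using convex_bound_le[of "g 0" "max (g 0) c" "g x" "1 - t" t] t \<open>g x \<le> c\<close> by simp
    moreover have "\<mu> / 2 * t * (1 - t) * n\<^sup>2 = \<mu> / 2 * (n - 1)"
      using n unfolding t_def by (simp add: field_simps power2_eq_square)
    ultimately have "- B \<le> max (g 0) c - \<mu> / 2 * (n - 1)"
      by linarith
    then have "n - 1 \<le> 2 * (max (g 0) c + B) / \<mu>"
      using \<open>\<mu> > 0\<close> by (simp add: field_simps)
    then show ?thesis
      unfolding n_def by simp
  qed
  then show ?thesis
    unfolding bounded_iff by blast
qed

lemma strongly_convex_on_arg_min: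
  fixes g :: "'a::euclidean_space \<Rightarrow> real"
  assumes sc: "strongly_convex_on UNIV \<mu> g" and "\<mu> > 0"
  shows "g (arg_min g (\<lambda>_. True)) \<le> g y"
proof -
  let ?S = "{x. g x \<le> g 0}"
  have cont: "continuous_on UNIV g"
    using strongly_convex_on_continuous[OF sc] \<open>\<mu> > 0\<close> by simp
  have "compact ?S"
    unfolding compact_eq_bounded_closed
    using strongly_convex_on_bounded_sublevel[OF assms] cont
    by (auto intro: closed_Collect_le continuous_on_subset)
  then obtain z where "z \<in> ?S" "\<And>y. y \<in> ?S \<Longrightarrow> g z \<le> g y"
    using continuous_attains_inf[of ?S g] cont continuous_on_subset by blast
  then have "g z \<le> g y" for y
    by (cases "y \<in> ?S") fastforce+
  then show ?thesis
    using arg_min_equality[of "\<lambda>_. True" z g] by simp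
qed

lemma strongly_convex_on_sublevel_dist_less:
  fixes g :: "'a::euclidean_space \<Rightarrow> real"
  assumes sc: "strongly_convex_on UNIV \<mu> g" and "\<mu> > 0"
    and "g x < 0" and "g y \<le> 0"
  shows "dist x y < 2 * sqrt (- 2 * g (arg_min g (\<lambda>_. True)) / \<mu>)"
proof -
  define z where "z = arg_min g (\<lambda>_. True)"
  define r where "r = sqrt (- 2 * g z / \<mu>)"
  have growth: "g z + \<mu> / 2 * (norm (w - z))\<^sup>2 \<le> g w" for w
    using strongly_convex_on_quadratic_growth[OF sc] strongly_convex_on_arg_min[OF assms(1,2)]
    unfolding z_def by blast
  have "(norm (x - z))\<^sup>2 < - 2 * g z / \<mu>"
    using growth[of x] \<open>g x < 0\<close> \<open>\<mu> > 0\<close> by (simp add: field_simps)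
  then have "dist x z < r"
    unfolding r_def dist_norm by (simp add: real_less_rsqrt)
  moreover have "(norm (y - z))\<^sup>2 \<le> - 2 * g z / \<mu>"
    using growth[of y] \<open>g y \<le> 0\<close> \<open>\<mu> > 0\<close> by (simp add: field_simps)
  then have "dist y z \<le> r"
    unfolding r_def dist_norm by (simp add: real_le_rsqrt)
  ultimately show ?thesis
    using dist_triangle2[of x y z] unfolding r_def z_def by linarith
qed

theorem proposition3:
  fixes f :: "real ^ 'n \<Rightarrow> real"
    and g :: "nat \<Rightarrow> real ^ 'n \<Rightarrow> real"
    and \<mu> :: "nat \<Rightarrow> real"
    and m :: nat
    and xt :: "real ^ 'n"
    and xopt :: "real ^ 'n"
  assumes m_pos: "m \<ge> 1"
    and f_convex: "convex_on UNIV f"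
    and f_cont: "continuous_on UNIV f"
    and f_bdd: "bdd_below (range f)"
    and g_diff: "\<And>i x. i \<in> {1..m} \<Longrightarrow> g i differentiable (at x)"
    and mu_pos: "\<And>i. i \<in> {1..m} \<Longrightarrow> \<mu> i > 0"
    and g_sc: "\<And>i. i \<in> {1..m} \<Longrightarrow> strongly_convex_on UNIV (\<mu> i) (g i)"
    and slater: "\<And>i. i \<in> {1..m} \<Longrightarrow> g i xt < 0"
    and unconstr: "\<And>x0. (\<forall>x. f x0 \<le> f x) \<Longrightarrow> (\<exists>i\<in>{1..m}. g i x0 > 0)"
    and xopt_feas: "\<And>i. i \<in> {1..m} \<Longrightarrow> g i xopt \<le> 0"
    and xopt_opt: "\<And>x. (\<forall>i\<in>{1..m}. g i x \<le> 0) \<Longrightarrow> f xopt \<le> f x"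
  shows "xopt \<in> interior (cball xt
           (Min ((\<lambda>i. 2 * sqrt (- 2 * g i (arg_min (g i) (\<lambda>_. True)) / \<mu> i)) ` {1..m})))"
proof -
  have "dist xt xopt < 2 * sqrt (- 2 * g i (arg_min (g i) (\<lambda>_. True)) / \<mu> i)"
    if "i \<in> {1..m}" for i
    using strongly_convex_on_sublevel_dist_less g_sc mu_pos slater xopt_feas that by blast
  then have "dist xt xopt < Min ((\<lambda>i. 2 * sqrt (- 2 * g i (arg_min (g i) (\<lambda>_. True)) / \<mu> i)) ` {1..m})"
    using m_pos by (subst Min_gr_iff) auto
  then show ?thesis
    by simp
qed

end
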